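(* Assume (C1) and (C2), fix $t>0$ and $i\in\{1,\dots,n\}$, and let $s\in[0,t)$. Let $\mathbb{H}^i(s,x,p)=\sup_{v\in\mathbb{R}^n}\{p\cdot v-\mathbb{L}^i(s,x,v)\}$. Then all $d^i_j(s)>0$ and $$\mathbb{H}^i(s,x,p)=\inf\Big\{\sum_{j=1}^n d^i_j(s)H^j\big(x,q_j/d^i_j(s)\big):\ q_1,\dots,q_n\in\mathbb{R}^n,\ \sum_{j=1}^n q_j=p\Big\},$$ the infimum being attained at a unique $(q_1,\dots,q_n)$; for this minimizer $\mathbb{H}^i_p(s,x,p)=H^j_p(x,q_j/d^i_j(s))$ for every $j$, and $\mathbb{H}^i_x(s,x,p)=\sum_{j=1}^n d^i_j(s)H^j_x(x,q_j/d^i_j(s))$.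
   Context: $L^i$ ($i=1,\dots,n$) are Tonelli Lagrangians on $\mathbb{R}^n\times\mathbb{R}^n$ ($C^2$, strictly convex and uniformly superlinear in $v$), $H^i(x,p)=\sup_{v}\{p\cdot v-L^i(x,v)\}$. $\boldsymbol A=(a^i_j)$ real $n\times n$ with (C1) $a^i_j\le0$ for $i\neq j$ and (C2) $\boldsymbol A$ irreducible. For fixed $t$, $(d^i_j(s))=e^{\boldsymbol A(s-t)}$ and $\mathbb{L}^i(s,x,v)=\sum_{j=1}^n d^i_j(s)L^j(x,v)$. *)

theory Defs
  imports "HOL-Analysis.Analysis"
begin

primrec mat_pow :: "real^'n^'n \<Rightarrow> nat \<Rightarrow> real^'n^'n" where
  "mat_pow M 0 = mat 1"
| "mat_pow M (Suc k) = M ** mat_pow M k"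

definition mat_exp :: "real^'n^'n \<Rightarrow> real^'n^'n" where
  "mat_exp M = (\<Sum>k. (1 / fact k) *\<^sub>R mat_pow M k)"

text \<open>Irreducible matrix: there is no nonempty proper index set I with a_ij = 0
  for all i in I and j not in I (i.e. A is not permutation-similar to a block
  triangular matrix).\<close>

definition irreducible_mat :: "real^'n^'n \<Rightarrow> bool" where
  "irreducible_mat A \<longleftrightarrow>
     \<not> (\<exists>I. I \<noteq> {} \<and> I \<noteq> UNIV \<and> (\<forall>i\<in>I. \<forall>j. j \<notin> I \<longrightarrow> A $ i $ j = 0))"

definition strictly_convex :: "('a::real_vector \<Rightarrow> real) \<Rightarrow> bool" where
  "strictly_convex f \<longleftrightarrow>
     (\<forall>u w \<theta>. u \<noteq> w \<and> 0 < \<theta> \<and> \<theta> < 1 \<longrightarrow>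
        f ((1 - \<theta>) *\<^sub>R u + \<theta> *\<^sub>R w) < (1 - \<theta>) * f u + \<theta> * f w)"

definition C2_fun :: "('a::real_normed_vector \<Rightarrow> real) \<Rightarrow> bool" where
  "C2_fun f \<longleftrightarrow>
     (\<exists>(f' :: 'a \<Rightarrow> ('a \<Rightarrow>\<^sub>L real)) (f'' :: 'a \<Rightarrow> ('a \<Rightarrow>\<^sub>L ('a \<Rightarrow>\<^sub>L real))).
        (\<forall>z. (f has_derivative blinfun_apply (f' z)) (at z)) \<and>
        (\<forall>z. (f' has_derivative blinfun_apply (f'' z)) (at z)) \<and>
        continuous_on UNIV f'')"

definition tonelli :: "(real^'n \<Rightarrow> real^'n \<Rightarrow> real) \<Rightarrow> bool" where
  "tonelli L \<longleftrightarrow>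
     C2_fun (\<lambda>(x, v). L x v) \<and>
     (\<forall>x. strictly_convex (L x)) \<and>
     (\<forall>K. \<exists>C. \<forall>x v. L x v \<ge> K * norm v - C)"

definition hamiltonian :: "(real^'n \<Rightarrow> real^'n \<Rightarrow> real) \<Rightarrow> real^'n \<Rightarrow> real^'n \<Rightarrow> real" where
  "hamiltonian L x p = (SUP v. p \<bullet> v - L x v)"

end

theory Submission
  imports Defs
begin

text \<open>
  Positivity of the weights: \<open>M = (s - t) A\<close> is an irreducible Metzler matrix. Adding \<open>c I\<close>
  makes it nonnegative without changing its off-diagonal pattern, so each entry of some power
  of \<open>M + c I\<close> is reached along a path of positive entries, and \<open>exp M = e\<^sup>-\<^sup>c exp (M + c I)\<close>
  is entrywise positive.

  The formula: let \<open>v\<close> be the maximizer in the definition of the Hamiltonian of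
  \<open>\<Sum>\<^sub>j d\<^sub>j L\<^sup>j\<close> at \<open>(x, p)\<close>. For every splitting \<open>p = \<Sum>\<^sub>j q\<^sub>j\<close> the Fenchel-Young inequality
  gives \<open>d\<^sub>j H\<^sup>j(x, q\<^sub>j / d\<^sub>j) \<ge> q\<^sub>j \<cdot> v - d\<^sub>j L\<^sup>j(x, v)\<close>, with equality iff
  \<open>q\<^sub>j = d\<^sub>j L\<^sup>j\<^sub>v(x, v)\<close>. Summing over \<open>j\<close> shows that the infimum is that Hamiltonian and is
  attained exactly at this splitting. All the \<open>H\<^sup>j(x, q\<^sub>j / d\<^sub>j)\<close> then share the maximizer \<open>v\<close>,
  which by the envelope theorem is their common \<open>p\<close>-gradient, while their \<open>x\<close>-gradients are
  \<open>-L\<^sup>j\<^sub>x(x, v)\<close> and hence add up with the weights \<open>d\<^sub>j\<close>.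
\<close>

lemma mat_pow_entry_bound:
  fixes X :: "real^'n::finite^'n"
  shows "\<bar>mat_pow X k $ i $ j\<bar> \<le> (real CARD('n) * (\<Sum>a\<in>UNIV. \<Sum>b\<in>UNIV. \<bar>X$a$b\<bar>))^k"
proof (induction k arbitrary: i j)
  case 0 then show ?case by (simp add: mat_def)
next
  case (Suc k)
  let ?m = "\<Sum>a\<in>UNIV. \<Sum>b\<in>UNIV. \<bar>X$a$b\<bar>"
  have entry_le: "\<bar>X$a$b\<bar> \<le> ?m" for a b
  proof -
    have "\<bar>X$a$b\<bar> \<le> (\<Sum>b\<in>UNIV. \<bar>X$a$b\<bar>)" by (rule member_le_sum) auto
    also have "\<dots> \<le> ?m" by (rule member_le_sum[where f="\<lambda>a. \<Sum>b\<in>UNIV. \<bar>X$a$b\<bar>"]) (auto intro: sum_nonneg)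
    finally show ?thesis .
  qed
  have "\<bar>mat_pow X (Suc k) $ i $ j\<bar> = \<bar>\<Sum>l\<in>UNIV. X$i$l * mat_pow X k $ l $ j\<bar>"
    by (simp add: matrix_matrix_mult_def)
  also have "\<dots> \<le> (\<Sum>l\<in>UNIV. \<bar>X$i$l\<bar> * \<bar>mat_pow X k $ l $ j\<bar>)"
    by (metis (no_types, lifting) abs_mult sum.cong sum_abs)
  also have "\<dots> \<le> (\<Sum>l\<in>(UNIV::'n set). ?m * (real CARD('n) * ?m)^k)"
    by (rule sum_mono, rule mult_mono) (use entry_le Suc in \<open>auto intro: sum_nonneg\<close>)
  also have "\<dots> = (real CARD('n) * ?m)^Suc k" by simp
  finally show ?case .
qed

lemma summable_mat_exp_entry:
  fixes X :: "real^'n::finite^'n"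
  shows "summable (\<lambda>k. norm ((1 / fact k) * mat_pow X k $ i $ j))"
proof -
  let ?b = "real CARD('n) * (\<Sum>a\<in>UNIV. \<Sum>b\<in>UNIV. \<bar>X$a$b\<bar>)"
  show ?thesis
  proof (rule summable_comparison_test[OF _ summable_exp[of ?b]])
    show "\<exists>N. \<forall>n\<ge>N. norm (norm (1 / fact n * mat_pow X n $ i $ j)) \<le> inverse (fact n) * ?b ^ n"
      using mat_pow_entry_bound[of X] by (auto simp: abs_mult divide_inverse intro!: mult_left_mono)
  qed
qed

lemma mat_exp_entry:
  fixes X :: "real^'n::finite^'n"
  shows "mat_exp X $ i $ j = (\<Sum>k. (1 / fact k) * mat_pow X k $ i $ j)"
proof -
  define S where "S = (\<chi> i j. \<Sum>k. (1 / fact k) * mat_pow X k $ i $ j)"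
  have "(\<lambda>k. (1 / fact k) *\<^sub>R mat_pow X k) sums S"
    unfolding sums_def
  proof (intro vec_tendstoI)
    fix a b
    have "(\<lambda>k. (1 / fact k) * mat_pow X k $ a $ b) sums (S $ a $ b)"
      unfolding S_def using summable_norm_cancel[OF summable_mat_exp_entry[of X a b]]
      by (simp add: summable_sums)
    then show "((\<lambda>x. (\<Sum>k<x. (1 / fact k) *\<^sub>R mat_pow X k) $ a $ b) \<longlongrightarrow> S $ a $ b) sequentially"
      by (simp add: sums_def sum_component)
  qed
  then have "mat_exp X = S" unfolding mat_exp_def by (rule sums_unique[symmetric])
  then show ?thesis unfolding S_def by simp
qed

lemma binomial_sum_Suc:
  fixes p :: "nat \<Rightarrow> real" and a :: real
  shows "(\<Sum>m\<le>k. real (k choose m) * a^(k-m) * p (Suc m)) + a * (\<Sum>m\<le>k. real (k choose m) * a^(k-m) * p m)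
       = (\<Sum>m\<le>Suc k. real (Suc k choose m) * a^(Suc k - m) * p m)"
proof -
  have rhs: "(\<Sum>m\<le>Suc k. real (Suc k choose m) * a^(Suc k - m) * p m)
     = a^Suc k * p 0 + (\<Sum>m\<le>k. real (k choose m) * a^(k-m) * p (Suc m))
        + (\<Sum>m\<le>k. real (k choose Suc m) * a^(k-m) * p (Suc m))"
    by (simp add: sum.atMost_Suc_shift sum.distrib algebra_simps del: sum.atMost_Suc)
  have lhs: "a * (\<Sum>m\<le>k. real (k choose m) * a^(k-m) * p m)
       = a^Suc k * p 0 + (\<Sum>m\<le>k. real (k choose Suc m) * a^(k-m) * p (Suc m))"
  proof (cases k)
    case 0 then show ?thesis by simp
  next
    case (Suc k')
    have "a * (\<Sum>m\<le>k. real (k choose m) * a^(k-m) * p m)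
        = a * (a^k * p 0 + (\<Sum>m\<le>k'. real (k choose Suc m) * a^(k - Suc m) * p (Suc m)))"
      using Suc by (simp only: sum.atMost_Suc_shift) simp
    also have "\<dots> = a^Suc k * p 0 + (\<Sum>m\<le>k'. real (k choose Suc m) * a^(k-m) * p (Suc m))"
      using Suc by (auto simp: sum_distrib_left algebra_simps Suc_diff_le intro!: sum.cong)
    also have "(\<Sum>m\<le>k'. real (k choose Suc m) * a^(k-m) * p (Suc m))
             = (\<Sum>m\<le>k. real (k choose Suc m) * a^(k-m) * p (Suc m))"
      using Suc by (simp only: sum.atMost_Suc) (simp add: binomial_eq_0)
    finally show ?thesis .
  qed
  show ?thesis using rhs lhs by simp
qed

lemma mat_pow_add_scalar:
  fixes X :: "real^'n::finite^'n"
  shows "mat_pow (X + a *\<^sub>R mat 1) k $ i $ j = (\<Sum>m\<le>k. real (k choose m) * a^(k-m) * mat_pow X m $ i $ j)"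
proof (induction k arbitrary: i j)
  case 0 then show ?case by simp
next
  case (Suc k)
  have distrib: "(X + a *\<^sub>R mat 1) ** P = X ** P + a *\<^sub>R P" for P :: "real^'n^'n"
  proof -
    have "(X + a *\<^sub>R mat 1) ** P = X ** P + (a *\<^sub>R mat 1) ** P"
      by (simp add: matrix_matrix_mult_def vec_eq_iff sum.distrib distrib_right)
    also have "(a *\<^sub>R mat 1) ** P = a *\<^sub>R P"
      by (simp add: scalar_matrix_assoc[symmetric])
    finally show ?thesis .
  qed
  have "mat_pow (X + a *\<^sub>R mat 1) (Suc k) $ i $ j
      = (\<Sum>l\<in>UNIV. X $ i $ l * mat_pow (X + a *\<^sub>R mat 1) k $ l $ j) + a * mat_pow (X + a *\<^sub>R mat 1) k $ i $ j"
    by (simp only: mat_pow.simps distrib) (simp add: matrix_matrix_mult_def)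
  also have "(\<Sum>l\<in>UNIV. X $ i $ l * mat_pow (X + a *\<^sub>R mat 1) k $ l $ j)
      = (\<Sum>m\<le>k. real (k choose m) * a^(k-m) * mat_pow X (Suc m) $ i $ j)"
    by (simp add: Suc sum_distrib_left matrix_matrix_mult_def sum_distrib_right algebra_simps
        sum.swap[where A=UNIV])
  finally show ?case using binomial_sum_Suc[of k a "\<lambda>m. mat_pow X m $ i $ j"] Suc by simp
qed

lemma mat_exp_add_scalar:
  fixes X :: "real^'n::finite^'n"
  shows "mat_exp (X + a *\<^sub>R mat 1) $ i $ j = exp a * mat_exp X $ i $ j"
proof -
  define \<alpha> where "\<alpha> m = (1 / fact m) * mat_pow X m $ i $ j" for m
  define \<beta> where "\<beta> l = a^l / fact l" for l
  have sa: "summable (\<lambda>k. norm (\<alpha> k))" unfolding \<alpha>_def by (rule summable_mat_exp_entry)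
  have sb: "summable (\<lambda>k. norm (\<beta> k))"
    unfolding \<beta>_def using summable_exp[of "\<bar>a\<bar>"]
    by (simp add: abs_mult power_abs divide_inverse mult.commute)
  have exp_a: "exp a = (\<Sum>l. \<beta> l)" unfolding \<beta>_def exp_def by (simp add: divide_inverse mult.commute)
  have series_term: "(1 / fact k) * (\<Sum>m\<le>k. real (k choose m) * a^(k-m) * mat_pow X m $ i $ j)
        = (\<Sum>m\<le>k. \<alpha> m * \<beta> (k - m))" for k
    unfolding \<alpha>_def \<beta>_def sum_distrib_left
    by (rule sum.cong) (auto simp: binomial_fact field_simps)
  have "mat_exp (X + a *\<^sub>R mat 1) $ i $ j = (\<Sum>k. \<Sum>m\<le>k. \<alpha> m * \<beta> (k - m))"
    unfolding mat_exp_entry mat_pow_add_scalar series_term ..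
  also have "\<dots> = (\<Sum>k. \<alpha> k) * (\<Sum>k. \<beta> k)" using Cauchy_product[OF sa sb] by simp
  also have "\<dots> = exp a * mat_exp X $ i $ j" by (simp add: exp_a mat_exp_entry \<alpha>_def)
  finally show ?thesis .
qed

lemma mat_pow_nonneg:
  fixes X :: "real^'n::finite^'n"
  assumes "\<And>a b. X $ a $ b \<ge> 0"
  shows "mat_pow X k $ i $ j \<ge> 0"
  using assms by (induction k arbitrary: i j) (auto simp: mat_def matrix_matrix_mult_def intro!: sum_nonneg)

lemma irreducible_matE:
  fixes X :: "real^'n::finite^'n"
  assumes irr: "irreducible_mat X" and "I \<noteq> {}" "I \<noteq> UNIV"
  obtains a b where "a \<in> I" "b \<notin> I" "X $ a $ b \<noteq> 0"
proof -
  from irr have "\<not> (I \<noteq> {} \<and> I \<noteq> UNIV \<and> (\<forall>a\<in>I. \<forall>b. b \<notin> I \<longrightarrow> X $ a $ b = 0))"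
    unfolding irreducible_mat_def by (rule contrapos_nn) (rule exI)
  then show ?thesis using that assms(2,3) by auto
qed

lemma irreducible_mat_cong_off_diag:
  fixes X M :: "real^'n::finite^'n"
  assumes "\<And>a b. a \<noteq> b \<Longrightarrow> X $ a $ b = M $ a $ b"
  shows "irreducible_mat X \<longleftrightarrow> irreducible_mat M"
proof -
  have "(\<forall>a\<in>I. \<forall>b. b \<notin> I \<longrightarrow> X $ a $ b = 0) \<longleftrightarrow> (\<forall>a\<in>I. \<forall>b. b \<notin> I \<longrightarrow> M $ a $ b = 0)" for I
  proof -
    have "X $ a $ b = M $ a $ b" if "a \<in> I" "b \<notin> I" for a b
      using that assms[of a b] by blast
    then show ?thesis by auto
  qed
  then show ?thesis unfolding irreducible_mat_def by simp
qed

lemma irreducible_mat_scaleR: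
  fixes A :: "real^'n::finite^'n"
  assumes "c \<noteq> 0"
  shows "irreducible_mat (c *\<^sub>R A) \<longleftrightarrow> irreducible_mat A"
  using assms by (simp add: irreducible_mat_def)

lemma mat_pow_pos_if_irreducible:
  fixes X :: "real^'n::finite^'n"
  assumes nonneg: "\<And>a b. X $ a $ b \<ge> 0" and irr: "irreducible_mat X"
  shows "\<exists>k. mat_pow X k $ i $ j > 0"
proof (rule ccontr)
  assume no_path: "\<not> ?thesis"
  define S where "S = {l. \<exists>k. mat_pow X k $ l $ j > 0}"
  have "j \<in> S" unfolding S_def by (auto intro!: exI[of _ 0] simp: mat_def)
  moreover have "i \<notin> S" using no_path unfolding S_def by auto
  ultimately have "- S \<noteq> {}" "- S \<noteq> UNIV" by auto
  then obtain a b where "a \<in> - S" "b \<notin> - S" and ab: "X $ a $ b \<noteq> 0"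
    by (rule irreducible_matE[OF irr])
  then have a: "a \<notin> S" and b: "b \<in> S" by auto
  from b obtain k where k: "mat_pow X k $ b $ j > 0" unfolding S_def by auto
  have "X $ a $ b > 0" using ab nonneg[of a b] by (simp add: less_le)
  then have "0 < X $ a $ b * mat_pow X k $ b $ j" using k by (rule mult_pos_pos)
  also have "\<dots> \<le> (\<Sum>l\<in>UNIV. X $ a $ l * mat_pow X k $ l $ j)"
    by (rule member_le_sum) (auto intro!: mult_nonneg_nonneg nonneg mat_pow_nonneg)
  also have "\<dots> = mat_pow X (Suc k) $ a $ j"
    by (simp add: matrix_matrix_mult_def)
  finally have "mat_pow X (Suc k) $ a $ j > 0" .
  then have "a \<in> S" unfolding S_def by blast
  with a show False by simp
qed

lemma mat_exp_pos_if_irreducible: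
  fixes X :: "real^'n::finite^'n"
  assumes nonneg: "\<And>a b. X $ a $ b \<ge> 0" and irr: "irreducible_mat X"
  shows "mat_exp X $ i $ j > 0"
proof -
  obtain k where k: "mat_pow X k $ i $ j > 0" using mat_pow_pos_if_irreducible[OF nonneg irr] by blast
  show ?thesis unfolding mat_exp_entry
    by (rule suminf_pos2[of _ k])
      (use k summable_norm_cancel[OF summable_mat_exp_entry] mat_pow_nonneg[OF nonneg] in auto)
qed

lemma mat_exp_pos_if_metzler_irreducible:
  fixes M :: "real^'n::finite^'n"
  assumes metzler: "\<And>a b. a \<noteq> b \<Longrightarrow> M $ a $ b \<ge> 0" and irr: "irreducible_mat M"
  shows "mat_exp M $ i $ j > 0"
proof -
  define c where "c = (\<Sum>a\<in>UNIV. \<bar>M $ a $ a\<bar>)"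
  define X where "X = M + c *\<^sub>R mat 1"
  have diag_le: "\<bar>M $ a $ a\<bar> \<le> c" for a unfolding c_def by (rule member_le_sum) auto
  have off_diag: "X $ a $ b = M $ a $ b" if "a \<noteq> b" for a b
    using that by (simp add: X_def mat_def)
  have nonneg: "X $ a $ b \<ge> 0" for a b
    using metzler[of a b] diag_le[of a] off_diag[of a b] by (cases "a = b") (auto simp: X_def mat_def)
  have "irreducible_mat X"
    using irr irreducible_mat_cong_off_diag[OF off_diag] by blast
  then have "mat_exp X $ i $ j > 0" by (rule mat_exp_pos_if_irreducible[OF nonneg])
  moreover have "mat_exp M $ i $ j = exp (- c) * mat_exp X $ i $ j"
  proof -
    have "M = X + (- c) *\<^sub>R mat 1" by (simp add: X_def)
    then show ?thesis by (simp only: mat_exp_add_scalar)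
  qed
  ultimately show ?thesis by simp
qed

lemma strictly_convex_imp_convex_on:
  assumes "strictly_convex f"
  shows "convex_on UNIV f"
proof (rule convex_onI[OF _ convex_UNIV])
  fix x y and t :: real assume t: "0 < t" "t < 1"
  show "f ((1 - t) *\<^sub>R x + t *\<^sub>R y) \<le> (1 - t) * f x + t * f y"
  proof (cases "x = y")
    case True then show ?thesis
      by (simp add: algebra_simps flip: scaleR_add_left)
  next
    case False
    with t assms show ?thesis unfolding strictly_convex_def by (auto intro: less_imp_le)
  qed
qed

lemma inner_sum_Basis_linear:
  fixes g :: "'a::euclidean_space \<Rightarrow> real"
  assumes "linear g"
  shows "(\<Sum>b\<in>Basis. g b *\<^sub>R b) \<bullet> h = g h"
proof -
  have "(\<Sum>b\<in>Basis. g b *\<^sub>R b) \<bullet> h = (\<Sum>b\<in>Basis. g b * (b \<bullet> h))"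
    by (simp add: inner_sum_left)
  also have "\<dots> = (\<Sum>b\<in>Basis. (h \<bullet> b) * g b)"
    by (simp add: inner_commute mult.commute)
  also have "\<dots> = g h"
    using Linear_Algebra.linear_componentwise[OF assms, of h 1] by simp
  finally show ?thesis .
qed

lemma bounded_linear_blinfun_apply_Pair:
  fixes B :: "('a::real_normed_vector \<times> 'b::real_normed_vector) \<Rightarrow>\<^sub>L 'c::real_normed_vector"
  shows "bounded_linear (\<lambda>h. B (h, 0))" and "bounded_linear (\<lambda>h. B (0, h))"
  by (intro bounded_linear_compose[OF blinfun.bounded_linear_right]
      bounded_linear_Pair bounded_linear_zero bounded_linear_ident)+

lemma dist_Pair_le:
  fixes a c :: "'a::real_normed_vector" and b d :: "'b::real_normed_vector"
  shows "dist (a, b) (c, d) \<le> dist a c + dist b d"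
  using norm_Pair_le[of "a - c" "b - d"] by (simp add: dist_norm)

locale tonelli_c1 =
  fixes l :: "real^'n::finite \<Rightarrow> real^'n \<Rightarrow> real"
    and l' :: "(real^'n) \<times> (real^'n) \<Rightarrow> ((real^'n) \<times> (real^'n)) \<Rightarrow>\<^sub>L real"
  assumes has_derivative_l: "\<And>z. ((\<lambda>z. l (fst z) (snd z)) has_derivative blinfun_apply (l' z)) (at z)"
    and continuous_l': "continuous_on UNIV l'"
    and strictly_convex_l: "\<And>y. strictly_convex (l y)"
    and superlinear_l: "\<And>K. \<exists>C. \<forall>y v. l y v \<ge> K * norm v - C"
begin

definition fenchel :: "real^'n \<Rightarrow> real^'n \<Rightarrow> real^'n \<Rightarrow> real" where
  "fenchel y u v = u \<bullet> v - l y v"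

definition velocity :: "real^'n \<Rightarrow> real^'n \<Rightarrow> real^'n" where
  "velocity y u = (SOME v. \<forall>w. fenchel y u w \<le> fenchel y u v)"

definition vgrad :: "real^'n \<Rightarrow> real^'n \<Rightarrow> real^'n" where
  "vgrad y v = (\<Sum>b\<in>Basis. l' (y, v) (0, b) *\<^sub>R b)"

definition xgrad :: "real^'n \<Rightarrow> real^'n \<Rightarrow> real^'n" where
  "xgrad y v = (\<Sum>b\<in>Basis. l' (y, v) (b, 0) *\<^sub>R b)"

lemma inner_vgrad: "vgrad y v \<bullet> h = l' (y, v) (0, h)"
  unfolding vgrad_def
  by (intro inner_sum_Basis_linear bounded_linear.linear bounded_linear_blinfun_apply_Pair)

lemma inner_xgrad: "xgrad y v \<bullet> h = l' (y, v) (h, 0)"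
  unfolding xgrad_def
  by (intro inner_sum_Basis_linear bounded_linear.linear bounded_linear_blinfun_apply_Pair)

lemma continuous_on_l: "continuous_on UNIV (\<lambda>z. l (fst z) (snd z))"
  by (intro continuous_at_imp_continuous_on ballI has_derivative_continuous[OF has_derivative_l])

lemma has_derivative_l_velocity: "((l y) has_derivative (\<lambda>h. l' (y, v) (0, h))) (at v)"
proof -
  have "(((\<lambda>z. l (fst z) (snd z)) \<circ> (\<lambda>v. (y, v))) has_derivative (blinfun_apply (l' (y, v)) \<circ> (\<lambda>h. (0, h)))) (at v)"
    by (rule diff_chain_at) (auto intro!: derivative_eq_intros has_derivative_l)
  then show ?thesis by (simp add: o_def)
qed

lemma has_derivative_l_position: "((\<lambda>y. l y v) has_derivative (\<lambda>h. l' (y, v) (h, 0))) (at y)"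
proof -
  have "(((\<lambda>z. l (fst z) (snd z)) \<circ> (\<lambda>y. (y, v))) has_derivative (blinfun_apply (l' (y, v)) \<circ> (\<lambda>h. (h, 0)))) (at y)"
    by (rule diff_chain_at) (auto intro!: derivative_eq_intros has_derivative_l)
  then show ?thesis by (simp add: o_def)
qed

lemma continuous_on_l_velocity: "continuous_on S (l y)"
  by (intro continuous_at_imp_continuous_on ballI has_derivative_continuous[OF has_derivative_l_velocity])

text \<open>Superlinearity makes \<^term>\<open>fenchel y u\<close> tend to \<open>-\<infinity>\<close>, so its supremum is attained
  on a ball.\<close>

lemma fenchel_attains_max: "\<exists>v. \<forall>w. fenchel y u w \<le> fenchel y u v"
proof -
  obtain C where C: "\<And>y v. l y v \<ge> (norm u + 1) * norm v - C" using superlinear_l by blast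
  have upper: "fenchel y u w \<le> C - norm w" for w
  proof -
    have "u \<bullet> w \<le> norm u * norm w" by (rule norm_cauchy_schwarz)
    moreover have "l y w \<ge> (norm u + 1) * norm w - C" by (rule C)
    ultimately show ?thesis unfolding fenchel_def by (simp add: algebra_simps)
  qed
  define R where "R = C + l y 0"
  have "cball 0 R \<noteq> {}" using upper[of 0] by (simp add: R_def fenchel_def)
  moreover have "continuous_on (cball 0 R) (fenchel y u)"
    unfolding fenchel_def by (auto intro!: continuous_intros continuous_on_l_velocity)
  ultimately obtain v where v: "v \<in> cball 0 R" "\<And>w. w \<in> cball 0 R \<Longrightarrow> fenchel y u w \<le> fenchel y u v"
    using continuous_attains_sup[of "cball 0 R" "fenchel y u"] by auto
  have "fenchel y u w \<le> fenchel y u v" for w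
  proof (cases "w \<in> cball 0 R")
    case True then show ?thesis using v by auto
  next
    case False
    then have "fenchel y u w < fenchel y u 0" using upper[of w] by (simp add: R_def fenchel_def)
    also have "\<dots> \<le> fenchel y u v" using v(2)[of 0] \<open>cball 0 R \<noteq> {}\<close> by auto
    finally show ?thesis by simp
  qed
  then show ?thesis by blast
qed

lemma fenchel_le_velocity: "fenchel y u w \<le> fenchel y u (velocity y u)"
  using someI_ex[OF fenchel_attains_max[of y u]] unfolding velocity_def by blast

lemma velocity_unique:
  assumes max: "\<And>w. fenchel y u w \<le> fenchel y u v"
  shows "velocity y u = v"
proof (rule ccontr)
  assume ne: "velocity y u \<noteq> v"
  let ?m = "(1 - 1/2) *\<^sub>R v + (1/2::real) *\<^sub>R velocity y u"
  have "l y ?m < (1 - 1/2) * l y v + (1/2) * l y (velocity y u)"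
    using strictly_convex_l[of y, unfolded strictly_convex_def, rule_format, of v "velocity y u" "1/2"]
      not_sym[OF ne] by simp
  then have "fenchel y u ?m > (1 - 1/2) * fenchel y u v + (1/2) * fenchel y u (velocity y u)"
    unfolding fenchel_def by (simp add: inner_add_right algebra_simps)
  moreover have "fenchel y u v = fenchel y u (velocity y u)"
    using max fenchel_le_velocity by (meson order_antisym)
  ultimately show False using max[of ?m] by simp
qed

lemma hamiltonian_eq_fenchel_velocity: "hamiltonian l y u = fenchel y u (velocity y u)"
  unfolding hamiltonian_def
  by (rule cSup_eq_maximum) (auto simp: fenchel_def[symmetric] fenchel_le_velocity)

lemma fenchel_le_hamiltonian: "fenchel y u v \<le> hamiltonian l y u"
  unfolding hamiltonian_eq_fenchel_velocity by (rule fenchel_le_velocity)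

lemma maximizer_imp_vgrad:
  assumes "\<And>w. fenchel y u w \<le> fenchel y u v"
  shows "vgrad y v = u"
proof -
  have deriv: "(fenchel y u has_derivative (\<lambda>h. u \<bullet> h - l' (y, v) (0, h))) (at v)"
    unfolding fenchel_def[abs_def] by (auto intro!: derivative_eq_intros has_derivative_l_velocity)
  have zero_deriv: "(\<lambda>h. u \<bullet> h - l' (y, v) (0, h)) = (\<lambda>h. 0)"
    by (rule differential_zero_maxmin[OF _ open_UNIV deriv]) (use assms in auto)
  from zero_deriv have "\<forall>h. u \<bullet> h - l' (y, v) (0, h) = 0"
    unfolding fun_eq_iff .
  then have "\<forall>h. vgrad y v \<bullet> h = u \<bullet> h"
    by (simp add: inner_vgrad)
  then show ?thesis by (rule vector_eq_rdot[THEN iffD1])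
qed

text \<open>The converse needs convexity: restricted to the segment from \<open>v\<close> to \<open>w\<close>, the
  Lagrangian lies above its tangent at \<open>v\<close>.\<close>

lemma vgrad_imp_maximizer: "fenchel y (vgrad y v) w \<le> fenchel y (vgrad y v) v"
proof -
  define g where "g t = l y (v + t *\<^sub>R (w - v))" for t :: real
  have convex: "convex_on UNIV g"
    unfolding g_def
  proof (rule convex_onI[OF _ convex_UNIV])
    fix a b t :: real assume t: "0 < t" "t < 1"
    have "v + ((1 - t) *\<^sub>R a + t *\<^sub>R b) *\<^sub>R (w - v)
        = (1 - t) *\<^sub>R (v + a *\<^sub>R (w - v)) + t *\<^sub>R (v + b *\<^sub>R (w - v))"
      by (simp add: algebra_simps)
    then show "l y (v + ((1 - t) *\<^sub>R a + t *\<^sub>R b) *\<^sub>R (w - v))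
        \<le> (1 - t) * l y (v + a *\<^sub>R (w - v)) + t * l y (v + b *\<^sub>R (w - v))"
      using convex_onD[OF strictly_convex_imp_convex_on[OF strictly_convex_l[of y]]] t by simp
  qed
  have "((l y \<circ> (\<lambda>t. v + t *\<^sub>R (w - v))) has_derivative
      ((\<lambda>h. l' (y, v) (0, h)) \<circ> (\<lambda>t. t *\<^sub>R (w - v)))) (at 0)"
    by (rule diff_chain_at) (auto intro!: derivative_eq_intros has_derivative_l_velocity[of y v, simplified])
  moreover have "l' (y, v) (0, t *\<^sub>R (w - v)) = t * (vgrad y v \<bullet> (w - v))" for t
    using blinfun.scaleR_right[of "l' (y, v)" t "(0, w - v)"] by (simp add: inner_vgrad)
  ultimately have deriv: "(g has_field_derivative (vgrad y v \<bullet> (w - v))) (at 0 within UNIV)"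
    by (auto simp: o_def g_def[abs_def] intro!: has_derivative_imp_has_field_derivative)
  have "g 1 - g 0 \<ge> vgrad y v \<bullet> (w - v) * (1 - 0)"
    by (rule convex_on_imp_above_tangent[OF convex connected_UNIV _ _ deriv]) auto
  then show ?thesis unfolding g_def fenchel_def by (simp add: inner_diff_right)
qed

lemma velocity_vgrad: "velocity y (vgrad y v) = v"
  by (rule velocity_unique) (rule vgrad_imp_maximizer)

lemma vgrad_velocity: "vgrad y (velocity y u) = u"
  by (rule maximizer_imp_vgrad) (rule fenchel_le_velocity)

lemma hamiltonian_vgrad: "hamiltonian l y (vgrad y v) = fenchel y (vgrad y v) v"
  using hamiltonian_eq_fenchel_velocity velocity_vgrad by simp

lemma hamiltonian_eq_fenchel_imp_vgrad:
  assumes "hamiltonian l y u = fenchel y u v"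
  shows "vgrad y v = u"
proof (rule maximizer_imp_vgrad)
  show "fenchel y u w \<le> fenchel y u v" for w
    using fenchel_le_hamiltonian[of y u w] assms by linarith
qed

lemma velocity_bounded:
  assumes "compact K"
  shows "bounded ((\<lambda>z. velocity (fst z) (snd z)) ` K)"
proof -
  have "compact (snd ` K)"
    by (rule compact_continuous_image[OF continuous_on_snd[OF continuous_on_id] assms])
  then have "bounded (snd ` K)" by (rule compact_imp_bounded)
  then obtain U where U0: "\<forall>u\<in>snd ` K. norm u \<le> U"
    unfolding bounded_iff by blast
  have U: "norm (snd z) \<le> U" if "z \<in> K" for z
    using bspec[OF U0 imageI[OF that]] .
  have "continuous_on K ((\<lambda>z. l (fst z) (snd z)) \<circ> (\<lambda>z. (fst z, 0)))"
    by (rule continuous_on_compose) (auto intro!: continuous_intros continuous_on_subset[OF continuous_on_l])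
  then have "compact ((\<lambda>z. l (fst z) 0) ` K)"
    using compact_continuous_image[OF _ assms] by (simp add: o_def)
  then have "bounded ((\<lambda>z. l (fst z) 0) ` K)" by (rule compact_imp_bounded)
  then obtain B where B0: "\<forall>r\<in>(\<lambda>z. l (fst z) 0) ` K. norm r \<le> B"
    unfolding bounded_iff by blast
  have B: "\<bar>l (fst z) 0\<bar> \<le> B" if "z \<in> K" for z
    using bspec[OF B0 imageI[OF that]] by simp
  obtain C where C: "\<And>y v. l y v \<ge> (U + 1) * norm v - C" using superlinear_l by blast
  have "norm (velocity (fst z) (snd z)) \<le> C + B" if "z \<in> K" for z
  proof -
    define v where "v = velocity (fst z) (snd z)"
    have "fenchel (fst z) (snd z) 0 \<le> fenchel (fst z) (snd z) v"
      unfolding v_def by (rule fenchel_le_velocity)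
    then have "- l (fst z) 0 \<le> snd z \<bullet> v - l (fst z) v" by (simp add: fenchel_def)
    moreover have "snd z \<bullet> v \<le> U * norm v"
    proof -
      have "snd z \<bullet> v \<le> norm (snd z) * norm v" by (rule norm_cauchy_schwarz)
      also have "\<dots> \<le> U * norm v" using U[OF that] by (rule mult_right_mono) simp
      finally show ?thesis .
    qed
    moreover have "l (fst z) v \<ge> U * norm v + norm v - C"
      using C[where y = "fst z" and v = v] by (simp add: algebra_simps)
    ultimately have "norm v \<le> C + B" using B[OF that] by linarith
    then show ?thesis unfolding v_def .
  qed
  then show ?thesis unfolding bounded_iff by blast
qed

lemma continuous_on_fenchel: "continuous_on UNIV (\<lambda>p. fenchel (fst (fst p)) (snd (fst p)) (snd p))"
proof -
  have "continuous_on UNIV ((\<lambda>z. l (fst z) (snd z)) \<circ> (\<lambda>p. (fst (fst p), snd p)))"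
    by (rule continuous_on_compose) (auto intro!: continuous_intros continuous_on_subset[OF continuous_on_l])
  then show ?thesis unfolding fenchel_def o_def by (auto intro!: continuous_intros)
qed

lemma fenchel_gap_away_from_velocity:
  assumes "e > 0"
  obtains \<eta> where "\<eta> > 0"
    and "\<And>w. norm w \<le> R \<Longrightarrow> dist (velocity y u) w \<ge> e \<Longrightarrow>
      fenchel y u w + 2 * \<eta> \<le> fenchel y u (velocity y u)"
proof (cases "cball 0 R - ball (velocity y u) e = {}")
  case True
  then show ?thesis by (intro that[of 1]) auto
next
  case False
  define K where "K = cball 0 R - ball (velocity y u) e"
  have "compact K" unfolding K_def by (intro compact_diff compact_cball open_ball)
  moreover have "K \<noteq> {}" using False unfolding K_def .
  moreover have "continuous_on K (fenchel y u)"
    unfolding fenchel_def[abs_def] by (auto intro!: continuous_intros continuous_on_l_velocity)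
  ultimately have "\<exists>k\<in>K. \<forall>w\<in>K. fenchel y u w \<le> fenchel y u k"
    by (rule continuous_attains_sup)
  then obtain k where k: "k \<in> K" and k_max: "\<And>w. w \<in> K \<Longrightarrow> fenchel y u w \<le> fenchel y u k"
    by blast
  have "fenchel y u k \<noteq> fenchel y u (velocity y u)"
  proof
    assume "fenchel y u k = fenchel y u (velocity y u)"
    then have "velocity y u = k" using fenchel_le_velocity by (intro velocity_unique) simp
    then show False using k \<open>e > 0\<close> unfolding K_def by auto
  qed
  then have "fenchel y u k < fenchel y u (velocity y u)"
    using fenchel_le_velocity[of y u k] by simp
  then show ?thesis
  proof (intro that[of "(fenchel y u (velocity y u) - fenchel y u k) / 2"])
    fix w assume "norm w \<le> R" "dist (velocity y u) w \<ge> e"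
    then have "w \<in> K" unfolding K_def by auto
    then have "fenchel y u w \<le> fenchel y u k" by (rule k_max)
    then show "fenchel y u w + 2 * ((fenchel y u (velocity y u) - fenchel y u k) / 2)
        \<le> fenchel y u (velocity y u)"
      by (simp add: field_simps)
  qed simp
qed

text \<open>Near \<open>z0\<close> the objective is uniformly close to the one at \<open>z0\<close>, which is smaller by a fixed
  gap away from the old maximizer; so the new maximizer cannot be far from it.\<close>

lemma isCont_velocity: "isCont (\<lambda>z. velocity (fst z) (snd z)) z0"
proof -
  define V where "V z = velocity (fst z) (snd z)" for z
  define \<Phi> where "\<Phi> p = fenchel (fst (fst p)) (snd (fst p)) (snd p)" for p
  obtain R where R: "\<And>z. z \<in> cball z0 1 \<Longrightarrow> norm (V z) \<le> R"
    using velocity_bounded[OF compact_cball] unfolding bounded_iff V_def by blast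
  have "\<exists>\<delta>>0. \<forall>z. dist z z0 < \<delta> \<longrightarrow> dist (V z) (V z0) < e" if "e > 0" for e
  proof -
    obtain \<eta> where \<eta>: "\<eta> > 0"
      and gap: "\<And>w. norm w \<le> R \<Longrightarrow> dist (V z0) w \<ge> e \<Longrightarrow> \<Phi> (z0, w) + 2 * \<eta> \<le> \<Phi> (z0, V z0)"
      using fenchel_gap_away_from_velocity[OF \<open>e > 0\<close>, of R "fst z0" "snd z0"]
      unfolding \<Phi>_def V_def by auto
    have "uniformly_continuous_on (cball z0 1 \<times> cball 0 R) \<Phi>"
      unfolding \<Phi>_def
      by (intro compact_uniformly_continuous compact_Times continuous_on_subset[OF continuous_on_fenchel])
        auto
    from this[unfolded uniformly_continuous_on_def, rule_format, OF \<eta>]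
    obtain d where d: "d > 0" and close0: "\<And>p p'. p \<in> cball z0 1 \<times> cball 0 R \<Longrightarrow>
        p' \<in> cball z0 1 \<times> cball 0 R \<Longrightarrow> dist p' p < d \<Longrightarrow> dist (\<Phi> p') (\<Phi> p) < \<eta>"
      by blast
    have "dist (V z) (V z0) < e" if z: "dist z z0 < min d 1" for z
    proof (rule ccontr)
      assume far: "\<not> dist (V z) (V z0) < e"
      have close: "\<bar>\<Phi> (z, v) - \<Phi> (z0, v)\<bar> < \<eta>" if "norm v \<le> R" for v
        using close0[of "(z0, v)" "(z, v)"] z that by (auto simp: dist_Pair_Pair dist_commute dist_real_def)
      have "\<Phi> (z, V z) < \<Phi> (z0, V z) + \<eta>" using close[of "V z"] R[of z] z by (simp add: dist_commute)
      also have "\<dots> \<le> \<Phi> (z0, V z0) - \<eta>" using gap[of "V z"] R[of z] z far by (simp add: dist_commute)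
      also have "\<dots> < \<Phi> (z, V z0)" using close[of "V z0"] R[of z0] by simp
      also have "\<dots> \<le> \<Phi> (z, V z)" unfolding \<Phi>_def V_def by (simp add: fenchel_le_velocity)
      finally show False by simp
    qed
    then show ?thesis using d by (intro exI[of _ "min d 1"]) auto
  qed
  then show ?thesis unfolding continuous_at_eps_delta V_def by blast
qed

lemma l_increment_estimate:
  assumes near: "\<And>y'. y' \<in> ball x r \<Longrightarrow> norm (l' (y', v) - l' (x, v0)) \<le> e"
    and y: "y \<in> ball x r"
  shows "\<bar>l y v - l x v - l' (x, v0) (y - x, 0)\<bar> \<le> e * norm (y - x)"
proof -
  define g where "g y' = l y' v - l' (x, v0) (y', 0)" for y'
  have "(g has_derivative (\<lambda>h. (l' (y', v) - l' (x, v0)) (h, 0))) (at y' within ball x r)" for y'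
    unfolding g_def blinfun.diff_left
    by (rule has_derivative_at_withinI)
      (intro has_derivative_diff has_derivative_l_position bounded_linear_imp_has_derivative
        bounded_linear_blinfun_apply_Pair)
  moreover have "onorm (\<lambda>h. (l' (y', v) - l' (x, v0)) (h, 0)) \<le> e" if "y' \<in> ball x r" for y'
  proof (rule onorm_le)
    fix h :: "real^'n"
    have "norm ((l' (y', v) - l' (x, v0)) (h, 0)) \<le> norm (l' (y', v) - l' (x, v0)) * norm (h, 0::real^'n)"
      by (rule norm_blinfun)
    also have "\<dots> \<le> e * norm h" using near[OF that] by (simp add: norm_Pair mult_right_mono)
    finally show "norm ((l' (y', v) - l' (x, v0)) (h, 0)) \<le> e * norm h" .
  qed
  moreover have "x \<in> ball x r" using y zero_le_dist[of x y] by (simp only: mem_ball dist_self)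
  ultimately have "norm (g y - g x) \<le> e * norm (y - x)"
    using y by (intro differentiable_bound[OF convex_ball]) auto
  moreover have "l' (x, v0) (y - x, 0) = l' (x, v0) (y, 0) - l' (x, v0) (x, 0)"
    using blinfun.diff_right[of "l' (x, v0)" "(y, 0)" "(x, 0)"] by simp
  ultimately show ?thesis unfolding g_def by (simp add: algebra_simps)
qed

lemma fenchel_increment_estimate:
  assumes near: "\<And>p. dist p (x, v0) < r \<Longrightarrow> norm (l' p - l' (x, v0)) \<le> e"
    and v: "dist v v0 < r / 2" "norm (v - v0) \<le> e"
    and yu: "norm ((y, u') - (x, u)) < r / 2"
  shows "\<bar>fenchel y u' v - fenchel x u v - ((u' - u) \<bullet> v0 - l' (x, v0) (y - x, 0))\<bar>
    \<le> 2 * e * norm ((y, u') - (x, u))"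
proof -
  let ?N = "norm ((y, u') - (x, u))"
  have yx: "norm (y - x) \<le> ?N" and uu: "norm (u' - u) \<le> ?N"
    using norm_fst_le[of "y - x" "u' - u"] norm_snd_le[of "u' - u" "y - x"] by simp_all
  have "r > 0" using v(1) zero_le_dist[of v v0] by linarith
  then have e: "e \<ge> 0" using near[of "(x, v0)"] by simp
  have "\<bar>l y v - l x v - l' (x, v0) (y - x, 0)\<bar> \<le> e * norm (y - x)"
  proof (rule l_increment_estimate)
    show "y \<in> ball x (r / 2)" using yx yu by (simp add: dist_norm norm_minus_commute)
    fix y' assume "y' \<in> ball x (r / 2)"
    then have "dist (y', v) (x, v0) < r" using dist_Pair_le[of y' v x v0] v(1) by (simp add: dist_commute)
    then show "norm (l' (y', v) - l' (x, v0)) \<le> e" by (rule near)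
  qed
  moreover have "\<bar>(u' - u) \<bullet> (v - v0)\<bar> \<le> norm (u' - u) * e"
    using Cauchy_Schwarz_ineq2[of "u' - u" "v - v0"] v(2) by (meson mult_left_mono norm_ge_zero order_trans)
  ultimately have "\<bar>(u' - u) \<bullet> (v - v0) - (l y v - l x v - l' (x, v0) (y - x, 0))\<bar>
      \<le> norm (u' - u) * e + e * norm (y - x)"
    using abs_triangle_ineq4 by (smt (verit))
  also have "\<dots> \<le> 2 * e * ?N"
  proof -
    have "norm (u' - u) * e \<le> e * ?N" using mult_right_mono[OF uu e] by (simp add: mult.commute)
    moreover have "e * norm (y - x) \<le> e * ?N" by (rule mult_left_mono[OF yx e])
    moreover have "2 * e * ?N = e * ?N + e * ?N" by simp
    ultimately show ?thesis by linarith
  qed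
  also have "(u' - u) \<bullet> (v - v0) - (l y v - l x v - l' (x, v0) (y - x, 0))
      = fenchel y u' v - fenchel x u v - ((u' - u) \<bullet> v0 - l' (x, v0) (y - x, 0))"
    by (simp add: fenchel_def inner_diff_left inner_diff_right)
  finally show ?thesis .
qed

text \<open>The increment of \<^term>\<open>hamiltonian l\<close> is squeezed between the increments of
  \<^term>\<open>fenchel\<close> at the old and at the new maximizer, and both are controlled by the estimate
  above.\<close>

lemma hamiltonian_increment_estimate:
  assumes near: "\<And>p. dist p (x, velocity x u) < r \<Longrightarrow> norm (l' p - l' (x, velocity x u)) \<le> e"
    and v: "dist (velocity y u') (velocity x u) < r / 2" "norm (velocity y u' - velocity x u) \<le> e"
    and yu: "norm ((y, u') - (x, u)) < r / 2"
  shows "\<bar>hamiltonian l y u' - hamiltonian l x u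
      - ((u' - u) \<bullet> velocity x u - l' (x, velocity x u) (y - x, 0))\<bar> \<le> 2 * e * norm ((y, u') - (x, u))"
proof -
  let ?old = "velocity x u" and ?new = "velocity y u'"
  let ?D = "(u' - u) \<bullet> ?old - l' (x, ?old) (y - x, 0)"
  have "r > 0" using v(1) zero_le_dist[of ?new ?old] by linarith
  then have "e \<ge> 0" using near[of "(x, ?old)"] by simp
  then have at_v0: "\<bar>fenchel y u' ?old - fenchel x u ?old - ?D\<bar> \<le> 2 * e * norm ((y, u') - (x, u))"
    using \<open>r > 0\<close> by (intro fenchel_increment_estimate[OF near _ _ yu]) auto
  have at_v: "\<bar>fenchel y u' ?new - fenchel x u ?new - ?D\<bar> \<le> 2 * e * norm ((y, u') - (x, u))"
    by (rule fenchel_increment_estimate[OF near v yu])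
  have "hamiltonian l y u' = fenchel y u' ?new" "hamiltonian l x u = fenchel x u ?old"
    by (rule hamiltonian_eq_fenchel_velocity)+
  moreover have "fenchel y u' ?old \<le> hamiltonian l y u'" "fenchel x u ?new \<le> hamiltonian l x u"
    by (rule fenchel_le_hamiltonian)+
  ultimately show ?thesis using at_v0 at_v by (simp add: abs_le_iff)
qed

lemma has_derivative_hamiltonian:
  "((\<lambda>z. hamiltonian l (fst z) (snd z)) has_derivative
     (\<lambda>w. snd w \<bullet> velocity x u - l' (x, velocity x u) (fst w, 0))) (at (x, u))"
  unfolding has_derivative_at_alt
proof (intro conjI allI impI)
  define v0 where "v0 = velocity x u"
  show "bounded_linear (\<lambda>w. snd w \<bullet> velocity x u - l' (x, velocity x u) (fst w, 0))"
    by (intro bounded_linear_sub bounded_linear_compose[OF bounded_linear_inner_left bounded_linear_snd]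
        bounded_linear_compose[OF bounded_linear_blinfun_apply_Pair(1) bounded_linear_fst])
  fix e :: real assume e: "e > 0"
  have "isCont l' (x, v0)" using continuous_l' continuous_on_eq_continuous_at[OF open_UNIV] by blast
  then obtain r where r: "r > 0" and near: "\<And>p. dist p (x, v0) < r \<Longrightarrow> norm (l' p - l' (x, v0)) \<le> e / 2"
    unfolding continuous_at_eps_delta dist_norm using e by (meson half_gt_zero less_imp_le)
  have "min (r / 2) (e / 2) > 0" using r e by simp
  from isCont_velocity[of "(x, u)", unfolded continuous_at_eps_delta, rule_format, OF this]
  obtain \<delta> where \<delta>: "\<delta> > 0"
    and vel: "\<And>z. dist z (x, u) < \<delta> \<Longrightarrow> dist (velocity (fst z) (snd z)) v0 < min (r / 2) (e / 2)"
    unfolding v0_def by auto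
  have "norm (hamiltonian l (fst z) (snd z) - hamiltonian l (fst (x, u)) (snd (x, u))
        - (snd (z - (x, u)) \<bullet> v0 - l' (x, v0) (fst (z - (x, u)), 0))) \<le> e * norm (z - (x, u))"
    if z: "norm (z - (x, u)) < min (r / 2) \<delta>" for z
  proof -
    obtain y u' where z_eq: "z = (y, u')" by fastforce
    have "dist (velocity y u') v0 < min (r / 2) (e / 2)" using vel[of z] z z_eq by (simp add: dist_norm)
    then have "dist (velocity y u') v0 < r / 2" "norm (velocity y u' - v0) \<le> e / 2"
      by (auto simp: dist_norm)
    with near have "\<bar>hamiltonian l y u' - hamiltonian l x u - ((u' - u) \<bullet> v0 - l' (x, v0) (y - x, 0))\<bar>
        \<le> 2 * (e / 2) * norm ((y, u') - (x, u))"
      using z z_eq unfolding v0_def by (intro hamiltonian_increment_estimate) auto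
    then show ?thesis unfolding z_eq by simp
  qed
  then show "\<exists>d>0. \<forall>z. norm (z - (x, u)) < d \<longrightarrow>
      norm (hamiltonian l (fst z) (snd z) - hamiltonian l (fst (x, u)) (snd (x, u))
        - (snd (z - (x, u)) \<bullet> velocity x u - l' (x, velocity x u) (fst (z - (x, u)), 0)))
      \<le> e * norm (z - (x, u))"
    using r \<delta> unfolding v0_def by (intro exI[of _ "min (r / 2) \<delta>"]) auto
qed

lemma has_derivative_hamiltonian_momentum:
  "((hamiltonian l x) has_derivative (\<lambda>k. velocity x u \<bullet> k)) (at u)"
proof -
  have "(((\<lambda>z. hamiltonian l (fst z) (snd z)) \<circ> (\<lambda>u. (x, u))) has_derivative
      ((\<lambda>w. snd w \<bullet> velocity x u - l' (x, velocity x u) (fst w, 0)) \<circ> (\<lambda>k. (0, k)))) (at u)"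
    by (rule diff_chain_at) (auto intro!: derivative_eq_intros has_derivative_hamiltonian)
  then show ?thesis by (simp add: o_def inner_commute zero_prod_def[symmetric])
qed

lemma has_derivative_hamiltonian_position:
  "((\<lambda>y. hamiltonian l y u) has_derivative (\<lambda>h. - (xgrad x (velocity x u) \<bullet> h))) (at x)"
proof -
  have "(((\<lambda>z. hamiltonian l (fst z) (snd z)) \<circ> (\<lambda>y. (y, u))) has_derivative
      ((\<lambda>w. snd w \<bullet> velocity x u - l' (x, velocity x u) (fst w, 0)) \<circ> (\<lambda>h. (h, 0)))) (at x)"
    by (rule diff_chain_at) (auto intro!: derivative_eq_intros has_derivative_hamiltonian)
  then show ?thesis by (simp add: o_def inner_xgrad)
qed

end

lemma tonelli_imp_tonelli_c1:
  fixes L :: "real^'n::finite \<Rightarrow> real^'n \<Rightarrow> real"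
  assumes "tonelli L"
  obtains L' where "tonelli_c1 L L'"
proof -
  from assms obtain L' :: "(real^'n) \<times> (real^'n) \<Rightarrow> ((real^'n) \<times> (real^'n)) \<Rightarrow>\<^sub>L real" and L''
    where d: "\<And>z. ((\<lambda>(x, v). L x v) has_derivative blinfun_apply (L' z)) (at z)"
      and d2: "\<And>z. (L' has_derivative blinfun_apply (L'' z)) (at z)"
    unfolding tonelli_def C2_fun_def by blast
  have "(\<lambda>(x, v). L x v) = (\<lambda>z. L (fst z) (snd z))" by (auto simp: fun_eq_iff split_beta)
  with d have "\<And>z. ((\<lambda>z. L (fst z) (snd z)) has_derivative blinfun_apply (L' z)) (at z)" by simp
  moreover have "continuous_on UNIV L'"
    by (intro continuous_at_imp_continuous_on ballI has_derivative_continuous[OF d2])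
  ultimately have "tonelli_c1 L L'" using assms unfolding tonelli_c1_def tonelli_def by blast
  then show ?thesis by (rule that)
qed

lemma strictly_convex_weighted_sum:
  fixes f :: "'j::finite \<Rightarrow> 'a::real_vector \<Rightarrow> real"
  assumes convex: "\<And>j. strictly_convex (f j)" and pos: "\<And>j. w j > 0"
  shows "strictly_convex (\<lambda>v. \<Sum>j\<in>UNIV. w j * f j v)"
  unfolding strictly_convex_def
proof (intro allI impI)
  fix u v :: 'a and \<theta> :: real assume uv: "u \<noteq> v \<and> 0 < \<theta> \<and> \<theta> < 1"
  have "(\<Sum>j\<in>UNIV. w j * f j ((1 - \<theta>) *\<^sub>R u + \<theta> *\<^sub>R v))
      < (\<Sum>j\<in>UNIV. w j * ((1 - \<theta>) * f j u + \<theta> * f j v))"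
  proof (rule sum_strict_mono)
    fix j
    have "f j ((1 - \<theta>) *\<^sub>R u + \<theta> *\<^sub>R v) < (1 - \<theta>) * f j u + \<theta> * f j v"
      using convex[of j] uv unfolding strictly_convex_def by blast
    then show "w j * f j ((1 - \<theta>) *\<^sub>R u + \<theta> *\<^sub>R v) < w j * ((1 - \<theta>) * f j u + \<theta> * f j v)"
      using pos[of j] by simp
  qed auto
  also have "\<dots> = (1 - \<theta>) * (\<Sum>j\<in>UNIV. w j * f j u) + \<theta> * (\<Sum>j\<in>UNIV. w j * f j v)"
    by (simp add: distrib_left sum.distrib sum_distrib_left mult.left_commute)
  finally show "(\<Sum>j\<in>UNIV. w j * f j ((1 - \<theta>) *\<^sub>R u + \<theta> *\<^sub>R v))
      < (1 - \<theta>) * (\<Sum>j\<in>UNIV. w j * f j u) + \<theta> * (\<Sum>j\<in>UNIV. w j * f j v)" .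
qed

lemma tonelli_c1_weighted_sum:
  fixes L :: "'j::finite \<Rightarrow> real^'n::finite \<Rightarrow> real^'n \<Rightarrow> real"
  assumes L: "\<And>j. tonelli_c1 (L j) (L' j)" and pos: "\<And>j. w j > 0"
  shows "tonelli_c1 (\<lambda>y v. \<Sum>j\<in>UNIV. w j * L j y v) (\<lambda>z. \<Sum>j\<in>UNIV. w j *\<^sub>R L' j z)"
proof
  fix z
  show "((\<lambda>z. \<Sum>j\<in>UNIV. w j * L j (fst z) (snd z)) has_derivative blinfun_apply (\<Sum>j\<in>UNIV. w j *\<^sub>R L' j z)) (at z)"
    by (auto intro!: derivative_eq_intros tonelli_c1.has_derivative_l[OF L]
        simp: blinfun.sum_left blinfun.scaleR_left)
next
  show "continuous_on UNIV (\<lambda>z. \<Sum>j\<in>UNIV. w j *\<^sub>R L' j z)"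
    using tonelli_c1.continuous_l'[OF L] by (auto intro!: continuous_intros)
next
  show "strictly_convex (\<lambda>v. \<Sum>j\<in>UNIV. w j * L j y v)" for y
    by (rule strictly_convex_weighted_sum[OF tonelli_c1.strictly_convex_l[OF L] pos])
next
  fix K
  \<comment> \<open>Each summand is made to grow with slope \<open>K / (w j * CARD('j))\<close>.\<close>
  have "\<forall>j. \<exists>C. \<forall>y v. L j y v \<ge> (K / (w j * real CARD('j))) * norm v - C"
    using tonelli_c1.superlinear_l[OF L] by blast
  then obtain C where C: "\<And>j y v. L j y v \<ge> (K / (w j * real CARD('j))) * norm v - C j"
    by metis
  have "(\<Sum>j\<in>UNIV. w j * L j y v) \<ge> K * norm v - (\<Sum>j\<in>UNIV. w j * C j)" for y v
  proof -
    have "K / real CARD('j) * norm v - w j * C j \<le> w j * L j y v" for j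
    proof -
      have "w j * ((K / (w j * real CARD('j))) * norm v - C j) \<le> w j * L j y v"
        using C[where j = j and y = y and v = v] pos[of j] by (intro mult_left_mono) auto
      then show ?thesis using pos[of j] by (simp add: algebra_simps)
    qed
    then have "(\<Sum>j\<in>UNIV. K / real CARD('j) * norm v - w j * C j) \<le> (\<Sum>j\<in>UNIV. w j * L j y v)"
      by (rule sum_mono)
    then show ?thesis by (simp add: sum_subtractf)
  qed
  then show "\<exists>C. \<forall>y v. (\<Sum>j\<in>UNIV. w j * L j y v) \<ge> K * norm v - C" by blast
qed

locale weighted_tonelli =
  fixes L :: "'j::finite \<Rightarrow> real^'n::finite \<Rightarrow> real^'n \<Rightarrow> real"
    and L' :: "'j \<Rightarrow> (real^'n) \<times> (real^'n) \<Rightarrow> ((real^'n) \<times> (real^'n)) \<Rightarrow>\<^sub>L real"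
    and w :: "'j \<Rightarrow> real"
  assumes tonelli_c1_L: "\<And>j. tonelli_c1 (L j) (L' j)"
    and weight_pos: "\<And>j. 0 < w j"
begin

definition weighted_L :: "real^'n \<Rightarrow> real^'n \<Rightarrow> real" where
  "weighted_L y v = (\<Sum>j\<in>UNIV. w j * L j y v)"

definition weighted_L' :: "(real^'n) \<times> (real^'n) \<Rightarrow> ((real^'n) \<times> (real^'n)) \<Rightarrow>\<^sub>L real" where
  "weighted_L' z = (\<Sum>j\<in>UNIV. w j *\<^sub>R L' j z)"

sublocale wL: tonelli_c1 weighted_L weighted_L'
  unfolding weighted_L_def[abs_def] weighted_L'_def[abs_def]
  by (rule tonelli_c1_weighted_sum[OF tonelli_c1_L weight_pos])

definition cost :: "real^'n \<Rightarrow> ('j \<Rightarrow> real^'n) \<Rightarrow> real" where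
  "cost x q = (\<Sum>j\<in>UNIV. w j * hamiltonian (L j) x ((1 / w j) *\<^sub>R q j))"

definition split_momentum :: "real^'n \<Rightarrow> real^'n \<Rightarrow> 'j \<Rightarrow> real^'n" where
  "split_momentum x p j = w j *\<^sub>R tonelli_c1.vgrad (L' j) x (wL.velocity x p)"

lemma wL_vgrad: "wL.vgrad y v = (\<Sum>j\<in>UNIV. w j *\<^sub>R tonelli_c1.vgrad (L' j) y v)"
proof (rule vector_eq_rdot[THEN iffD1], intro allI)
  fix h
  show "wL.vgrad y v \<bullet> h = (\<Sum>j\<in>UNIV. w j *\<^sub>R tonelli_c1.vgrad (L' j) y v) \<bullet> h"
    by (simp add: wL.inner_vgrad tonelli_c1.inner_vgrad[OF tonelli_c1_L] weighted_L'_def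
        inner_sum_left blinfun.sum_left blinfun.scaleR_left)
qed

lemma wL_xgrad: "wL.xgrad y v = (\<Sum>j\<in>UNIV. w j *\<^sub>R tonelli_c1.xgrad (L' j) y v)"
proof (rule vector_eq_rdot[THEN iffD1], intro allI)
  fix h
  show "wL.xgrad y v \<bullet> h = (\<Sum>j\<in>UNIV. w j *\<^sub>R tonelli_c1.xgrad (L' j) y v) \<bullet> h"
    by (simp add: wL.inner_xgrad tonelli_c1.inner_xgrad[OF tonelli_c1_L] weighted_L'_def
        inner_sum_left blinfun.sum_left blinfun.scaleR_left)
qed

lemma sum_split_momentum: "(\<Sum>j\<in>UNIV. split_momentum x p j) = p"
  unfolding split_momentum_def wL_vgrad[symmetric] by (rule wL.vgrad_velocity)

lemma velocity_split_momentum: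
  "tonelli_c1.velocity (L j) x ((1 / w j) *\<^sub>R split_momentum x p j) = wL.velocity x p"
  using weight_pos[of j] by (simp add: split_momentum_def tonelli_c1.velocity_vgrad[OF tonelli_c1_L])

lemma hamiltonian_weighted_L_eq:
  assumes "(\<Sum>j\<in>UNIV. q j) = p"
  shows "hamiltonian weighted_L x p
    = (\<Sum>j\<in>UNIV. q j \<bullet> wL.velocity x p - w j * L j x (wL.velocity x p))"
  unfolding assms[symmetric]
  by (simp add: wL.hamiltonian_eq_fenchel_velocity wL.fenchel_def weighted_L_def sum_subtractf inner_sum_left)

lemma weighted_fenchel_young:
  "r \<bullet> v - w j * L j x v \<le> w j * hamiltonian (L j) x ((1 / w j) *\<^sub>R r)"
proof -
  have "((1 / w j) *\<^sub>R r) \<bullet> v - L j x v \<le> hamiltonian (L j) x ((1 / w j) *\<^sub>R r)"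
    using tonelli_c1.fenchel_le_hamiltonian[OF tonelli_c1_L] tonelli_c1.fenchel_def[OF tonelli_c1_L] by metis
  then show ?thesis using weight_pos[of j] by (simp add: field_simps)
qed

lemma weighted_fenchel_young_eq:
  assumes "w j * hamiltonian (L j) x ((1 / w j) *\<^sub>R r) = r \<bullet> v - w j * L j x v"
  shows "r = w j *\<^sub>R tonelli_c1.vgrad (L' j) x v"
proof -
  have "hamiltonian (L j) x ((1 / w j) *\<^sub>R r) = tonelli_c1.fenchel (L j) x ((1 / w j) *\<^sub>R r) v"
    using assms weight_pos[of j] by (simp add: tonelli_c1.fenchel_def[OF tonelli_c1_L] field_simps)
  then have "tonelli_c1.vgrad (L' j) x v = (1 / w j) *\<^sub>R r"
    by (rule tonelli_c1.hamiltonian_eq_fenchel_imp_vgrad[OF tonelli_c1_L])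
  then show ?thesis using weight_pos[of j] by simp
qed

lemma hamiltonian_le_cost:
  assumes "(\<Sum>j\<in>UNIV. q j) = p"
  shows "hamiltonian weighted_L x p \<le> cost x q"
  unfolding hamiltonian_weighted_L_eq[OF assms] cost_def
  by (rule sum_mono) (rule weighted_fenchel_young)

lemma cost_split_momentum: "cost x (split_momentum x p) = hamiltonian weighted_L x p"
proof -
  let ?v = "wL.velocity x p"
  have "w j * hamiltonian (L j) x ((1 / w j) *\<^sub>R split_momentum x p j)
      = split_momentum x p j \<bullet> ?v - w j * L j x ?v" for j
  proof -
    have "(1 / w j) *\<^sub>R split_momentum x p j = tonelli_c1.vgrad (L' j) x ?v"
      using weight_pos[of j] by (simp add: split_momentum_def)
    then show ?thesis
      using weight_pos[of j] by (simp add: tonelli_c1.hamiltonian_vgrad[OF tonelli_c1_L]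
          tonelli_c1.fenchel_def[OF tonelli_c1_L] split_momentum_def algebra_simps)
  qed
  then show ?thesis
    unfolding cost_def hamiltonian_weighted_L_eq[OF sum_split_momentum[of x p]] by simp
qed

lemma cost_eq_imp_split_momentum:
  assumes sum_q: "(\<Sum>j\<in>UNIV. q j) = p" and eq: "cost x q = hamiltonian weighted_L x p"
  shows "q = split_momentum x p"
proof
  fix j
  let ?v = "wL.velocity x p"
  define gap where "gap j = w j * hamiltonian (L j) x ((1 / w j) *\<^sub>R q j) - (q j \<bullet> ?v - w j * L j x ?v)" for j
  have "(\<Sum>j\<in>UNIV. gap j) = 0"
    using eq unfolding gap_def cost_def hamiltonian_weighted_L_eq[OF sum_q] by (simp add: sum_subtractf)
  moreover have "\<forall>j\<in>UNIV. gap j \<ge> 0" unfolding gap_def using weighted_fenchel_young by simp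
  ultimately have "gap j = 0" using sum_nonneg_eq_0_iff[of UNIV gap] by simp
  then have "q j = w j *\<^sub>R tonelli_c1.vgrad (L' j) x ?v"
    unfolding gap_def by (intro weighted_fenchel_young_eq) simp
  then show "q j = split_momentum x p j" unfolding split_momentum_def .
qed

lemma hamiltonian_weighted_L_eq_Inf: "hamiltonian weighted_L x p = Inf {cost x q | q. (\<Sum>j\<in>UNIV. q j) = p}"
proof (rule cInf_eq_minimum[symmetric])
  show "hamiltonian weighted_L x p \<in> {cost x q | q. (\<Sum>j\<in>UNIV. q j) = p}"
    using cost_split_momentum sum_split_momentum by (metis (mono_tags, lifting) mem_Collect_eq)
  show "hamiltonian weighted_L x p \<le> c" if "c \<in> {cost x q | q. (\<Sum>j\<in>UNIV. q j) = p}" for c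
    using that hamiltonian_le_cost by blast
qed

lemma has_derivative_hamiltonian_split_momentum:
  "((hamiltonian (L j) x) has_derivative (\<lambda>h. wL.velocity x p \<bullet> h))
     (at ((1 / w j) *\<^sub>R split_momentum x p j))"
  using tonelli_c1.has_derivative_hamiltonian_momentum[OF tonelli_c1_L, of j x "(1 / w j) *\<^sub>R split_momentum x p j"]
  unfolding velocity_split_momentum .

lemma has_derivative_hamiltonian_split_position:
  "((\<lambda>y. hamiltonian (L j) y ((1 / w j) *\<^sub>R split_momentum x p j)) has_derivative
     (\<lambda>h. - tonelli_c1.xgrad (L' j) x (wL.velocity x p) \<bullet> h)) (at x)"
  using tonelli_c1.has_derivative_hamiltonian_position[OF tonelli_c1_L, of j "(1 / w j) *\<^sub>R split_momentum x p j" x]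
  unfolding velocity_split_momentum by simp

lemma has_derivative_hamiltonian_weighted_L_position:
  "((\<lambda>y. hamiltonian weighted_L y p) has_derivative
     (\<lambda>h. (\<Sum>j\<in>UNIV. w j *\<^sub>R - tonelli_c1.xgrad (L' j) x (wL.velocity x p)) \<bullet> h)) (at x)"
  using wL.has_derivative_hamiltonian_position[of p x]
  by (simp add: wL_xgrad sum_negf)

theorem hamiltonian_weighted_L_inf_convolution:
  "hamiltonian weighted_L x p = Inf {cost x q | q. (\<Sum>j\<in>UNIV. q j) = p} \<and>
   (\<exists>q. (\<Sum>j\<in>UNIV. q j) = p \<and> cost x q = hamiltonian weighted_L x p \<and>
        (\<forall>q'. (\<Sum>j\<in>UNIV. q' j) = p \<and> cost x q' = hamiltonian weighted_L x p \<longrightarrow> q' = q) \<and>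
        (\<exists>Gp. (hamiltonian weighted_L x has_derivative (\<lambda>h. Gp \<bullet> h)) (at p) \<and>
              (\<forall>j. (hamiltonian (L j) x has_derivative (\<lambda>h. Gp \<bullet> h)) (at ((1 / w j) *\<^sub>R q j)))) \<and>
        (\<exists>Gx. (\<forall>j. ((\<lambda>y. hamiltonian (L j) y ((1 / w j) *\<^sub>R q j)) has_derivative (\<lambda>h. Gx j \<bullet> h)) (at x)) \<and>
              ((\<lambda>y. hamiltonian weighted_L y p) has_derivative (\<lambda>h. (\<Sum>j\<in>UNIV. w j *\<^sub>R Gx j) \<bullet> h)) (at x)))"
proof (intro conjI, fact hamiltonian_weighted_L_eq_Inf, rule exI[of _ "split_momentum x p"],
    intro conjI allI impI exI[of _ "wL.velocity x p"]
    exI[of _ "\<lambda>j. - tonelli_c1.xgrad (L' j) x (wL.velocity x p)"])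
qed (use cost_eq_imp_split_momentum sum_split_momentum cost_split_momentum
    wL.has_derivative_hamiltonian_momentum has_derivative_hamiltonian_split_momentum
    has_derivative_hamiltonian_split_position has_derivative_hamiltonian_weighted_L_position in auto)

end

theorem mainTheorem2:
  fixes L :: "'n::finite \<Rightarrow> real^'n \<Rightarrow> real^'n \<Rightarrow> real"
    and A :: "real^'n^'n"
    and t s :: real and i :: 'n
  assumes tonelli: "\<And>j. tonelli (L j)"
    and C1: "\<And>k j. k \<noteq> j \<Longrightarrow> A $ k $ j \<le> 0"
    and C2: "irreducible_mat A"
    and t_pos: "t > 0"
    and s_in: "0 \<le> s" "s < t"
  defines "d \<equiv> (\<lambda>j. mat_exp ((s - t) *\<^sub>R A) $ i $ j)"
    and "H \<equiv> (\<lambda>j. hamiltonian (L j))"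
    and "HH \<equiv> hamiltonian (\<lambda>x v. \<Sum>j\<in>UNIV. mat_exp ((s - t) *\<^sub>R A) $ i $ j * L j x v)"
  shows "(\<forall>j. d j > 0) \<and>
    (\<forall>x p.
       HH x p = Inf {(\<Sum>j\<in>UNIV. d j * H j x ((1 / d j) *\<^sub>R q j)) | q. (\<Sum>j\<in>UNIV. q j) = p} \<and>
       (\<exists>q. (\<Sum>j\<in>UNIV. q j) = p \<and>
            (\<Sum>j\<in>UNIV. d j * H j x ((1 / d j) *\<^sub>R q j)) = HH x p \<and>
            (\<forall>q'. (\<Sum>j\<in>UNIV. q' j) = p \<and>
                  (\<Sum>j\<in>UNIV. d j * H j x ((1 / d j) *\<^sub>R q' j)) = HH x p \<longrightarrow> q' = q) \<and>
            (\<exists>Gp. ((\<lambda>p'. HH x p') has_derivative (\<lambda>h. Gp \<bullet> h)) (at p) \<and>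
                  (\<forall>j. ((\<lambda>p'. H j x p') has_derivative (\<lambda>h. Gp \<bullet> h)) (at ((1 / d j) *\<^sub>R q j)))) \<and>
            (\<exists>Gx. (\<forall>j. ((\<lambda>y. H j y ((1 / d j) *\<^sub>R q j)) has_derivative (\<lambda>h. Gx j \<bullet> h)) (at x)) \<and>
                  ((\<lambda>y. HH y p) has_derivative (\<lambda>h. (\<Sum>j\<in>UNIV. d j *\<^sub>R Gx j) \<bullet> h)) (at x))))"
proof -
  have d_pos: "d j > 0" for j
  proof -
    have "(s - t) * A $ a $ b \<ge> 0" if "a \<noteq> b" for a b
      using C1[OF that] s_in by (simp add: mult_nonpos_nonpos)
    moreover have "irreducible_mat ((s - t) *\<^sub>R A)" using C2 s_in by (simp add: irreducible_mat_scaleR)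
    ultimately show ?thesis unfolding d_def by (intro mat_exp_pos_if_metzler_irreducible) auto
  qed
  have "\<exists>L'. tonelli_c1 (L j) L'" for j
    by (rule tonelli_imp_tonelli_c1[OF tonelli]) blast
  then obtain L' where L': "\<And>j. tonelli_c1 (L j) (L' j)" by metis
  interpret W: weighted_tonelli L L' d
    using L' d_pos by (rule weighted_tonelli.intro)
  have HH: "HH = hamiltonian W.weighted_L" unfolding W.weighted_L_def[abs_def] unfolding HH_def d_def ..
  show ?thesis
    unfolding HH H_def
    by (intro W.hamiltonian_weighted_L_inf_convolution[unfolded W.cost_def] d_pos conjI allI)
qed
end
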